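(* Let $a\geq 1$ and $n,p>1$ be integers and let $G$ be a regular graph. Then $apG\circ nK_1$ is distance magic if and only if $aH_{n,p}\otimes G$ is distance magic.
   Context: A graph $G$ on $v$ vertices is distance magic if there is a bijection $f:V(G)\to\{1,\ldots,v\}$ and a constant $k$ such that for every vertex $x$, $\sum_{y\in N(x)}f(y)=k$, where $N(x)$ is the set of neighbours of $x$. $H_{n,p}$ denotes the complete multipartite graph with $p$ partite sets each of size $n$; $cH$ denotes the disjoint union of $c$ copies of $H$; $nK_1$ is the edgeless graph on $n$ vertices. The lexicographic product $G\circ H$ has vertex set $V(G)\times V(H)$, with $(g,h)\sim(g',h')$ iff $gg'\in E(G)$, or $g=g'$ and $hh'\in E(H)$. The Kronecker (tensor) product $G\otimes H$ has vertex set $V(G)\times V(H)$, with $(g,h)\sim(g',h')$ iff $gg'\in E(G)$ and $hh'\in E(H)$. *)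

theory Defs
  imports Main
begin

type_synonym 'a graph = "'a set \<times> ('a \<Rightarrow> 'a \<Rightarrow> bool)"

definition verts :: "'a graph \<Rightarrow> 'a set" where "verts G = fst G"
definition adj :: "'a graph \<Rightarrow> 'a \<Rightarrow> 'a \<Rightarrow> bool" where "adj G = snd G"

definition nbhd :: "'a graph \<Rightarrow> 'a \<Rightarrow> 'a set" where
  "nbhd G x = {y \<in> verts G. adj G x y}"

definition simple_graph :: "'a graph \<Rightarrow> bool" where
  "simple_graph G \<longleftrightarrow> finite (verts G) \<and>
     (\<forall>x\<in>verts G. \<forall>y\<in>verts G. adj G x y \<longrightarrow> adj G y x) \<and>
     (\<forall>x\<in>verts G. \<not> adj G x x)"

definition regular :: "'a graph \<Rightarrow> bool" where
  "regular G \<longleftrightarrow> (\<exists>d. \<forall>x\<in>verts G. card (nbhd G x) = d)"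

definition distance_magic :: "'a graph \<Rightarrow> bool" where
  "distance_magic G \<longleftrightarrow> (\<exists>f :: 'a \<Rightarrow> nat. \<exists>k.
     bij_betw f (verts G) {1..card (verts G)} \<and>
     (\<forall>x\<in>verts G. (\<Sum>y\<in>nbhd G x. f y) = k))"

definition copies :: "nat \<Rightarrow> 'a graph \<Rightarrow> (nat \<times> 'a) graph" where
  "copies c G = ({0..<c} \<times> verts G, \<lambda>(i,x) (j,y). i = j \<and> adj G x y)"

definition empty_graph :: "nat \<Rightarrow> nat graph" where
  "empty_graph n = ({0..<n}, \<lambda>_ _. False)"

text \<open>$H_{n,p}$: complete multipartite graph with $p$ parts of size $n$.\<close>
definition complete_multipartite :: "nat \<Rightarrow> nat \<Rightarrow> (nat \<times> nat) graph" where
  "complete_multipartite n p = ({0..<p} \<times> {0..<n}, \<lambda>(i,u) (j,v). i \<noteq> j)"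

definition lex_prod :: "'a graph \<Rightarrow> 'b graph \<Rightarrow> ('a \<times> 'b) graph" where
  "lex_prod G H = (verts G \<times> verts H,
     \<lambda>(g,h) (g',h'). adj G g g' \<or> (g = g' \<and> adj H h h'))"

definition tensor_prod :: "'a graph \<Rightarrow> 'b graph \<Rightarrow> ('a \<times> 'b) graph" where
  "tensor_prod G H = (verts G \<times> verts H,
     \<lambda>(g,h) (g',h'). adj G g g' \<and> adj H h h')"

end

theory Submission
  imports Defs
begin

text \<open>Identify the vertex \<open>((k*p + i, x), u)\<close> of \<open>apG \<circ> nK\<^sub>1\<close> with the vertex
  \<open>((k, (i, u)), x)\<close> of \<open>aH\<^sub>n\<^sub>,\<^sub>p \<otimes> G\<close> and, for a labelling \<open>f\<close>, let \<open>s c x\<close> be the total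
  label of the block \<open>{c} \<times> N(x) \<times> {0..<n}\<close>. The neighbourhood sum at \<open>((c, x), u)\<close> in the
  lexicographic product is \<open>s c x\<close>, while at \<open>((k, (i, u)), x)\<close> in the tensor product it is
  \<open>\<Sum>\<^sub>j\<^sub>\<noteq>\<^sub>i s (k*p + j) x\<close>. For \<open>p > 1\<close> the second family is constant exactly when the
  first one is, so both graphs have the same distance magic labellings.\<close>

definition constant_nbhd_sums :: "'a graph \<Rightarrow> ('a \<Rightarrow> nat) \<Rightarrow> bool" where
  "constant_nbhd_sums G f \<longleftrightarrow> (\<exists>k. \<forall>x\<in>verts G. sum f (nbhd G x) = k)"

lemma distance_magic_iff_constant_nbhd_sums:
  "distance_magic G \<longleftrightarrow>
     (\<exists>f. bij_betw f (verts G) {1..card (verts G)} \<and> constant_nbhd_sums G f)"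
  unfolding distance_magic_def constant_nbhd_sums_def by blast

lemma distance_magic_iff_if_bij_betw:
  assumes \<phi>: "bij_betw \<phi> (verts H) (verts G)"
    and sums: "\<And>f. constant_nbhd_sums G f \<longleftrightarrow> constant_nbhd_sums H (f \<circ> \<phi>)"
  shows "distance_magic G \<longleftrightarrow> distance_magic H"
proof -
  have card: "card (verts H) = card (verts G)"
    using \<phi> by (rule bij_betw_same_card)
  show ?thesis
  proof
    assume "distance_magic G"
    then obtain f where f: "bij_betw f (verts G) {1..card (verts G)}" "constant_nbhd_sums G f"
      by (auto simp: distance_magic_iff_constant_nbhd_sums)
    have "bij_betw (f \<circ> \<phi>) (verts H) {1..card (verts H)}"
      unfolding card using \<phi> f(1) by (rule bij_betw_trans)
    moreover have "constant_nbhd_sums H (f \<circ> \<phi>)"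
      using f(2) sums by blast
    ultimately show "distance_magic H"
      unfolding distance_magic_iff_constant_nbhd_sums by blast
  next
    assume "distance_magic H"
    then obtain h where h: "bij_betw h (verts H) {1..card (verts H)}" "constant_nbhd_sums H h"
      by (auto simp: distance_magic_iff_constant_nbhd_sums)
    define f where "f = h \<circ> inv_into (verts H) \<phi>"
    have "bij_betw f (verts G) {1..card (verts G)}"
      unfolding f_def card[symmetric] using bij_betw_inv_into[OF \<phi>] h(1) by (rule bij_betw_trans)
    moreover have "constant_nbhd_sums G f"
    proof -
      have "sum (f \<circ> \<phi>) (nbhd H x) = sum h (nbhd H x)" for x
        using bij_betw_inv_into_left[OF \<phi>] by (intro sum.cong) (auto simp: f_def nbhd_def)
      then have "constant_nbhd_sums H (f \<circ> \<phi>)"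
        using h(2) by (simp add: constant_nbhd_sums_def)
      then show ?thesis using sums by blast
    qed
    ultimately show "distance_magic G"
      unfolding distance_magic_iff_constant_nbhd_sums by blast
  qed
qed

lemma sum_remove_eq_imp_eq:
  fixes g :: "'i \<Rightarrow> 'b::cancel_comm_monoid_add"
  assumes "finite A" and "\<And>i. i \<in> A \<Longrightarrow> sum g (A - {i}) = K" and "i \<in> A" "j \<in> A"
  shows "g i = g j"
proof -
  have "g i + K = g j + K"
    using assms sum.remove[of A i g] sum.remove[of A j g] by simp
  then show ?thesis by simp
qed

lemma sum_remove_eq_imp_mult_eq:
  fixes g :: "'i \<Rightarrow> nat"
  assumes A: "finite A" and sums: "\<And>i. i \<in> A \<Longrightarrow> sum g (A - {i}) = K" and "j \<in> A"
  shows "(card A - 1) * g j = K"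
proof -
  have "sum g (A - {j}) = sum (\<lambda>_. g j) (A - {j})"
    using sum_remove_eq_imp_eq[OF A sums _ \<open>j \<in> A\<close>] by (intro sum.cong) auto
  then show ?thesis using sums[OF \<open>j \<in> A\<close>] A \<open>j \<in> A\<close> by simp
qed

text \<open>The common value of \<open>g t j\<close> is forced to be \<open>K div (card A - 1)\<close>, independently of \<open>t\<close>.\<close>

lemma const_sum_remove_iff_const:
  fixes g :: "'t \<Rightarrow> 'i \<Rightarrow> nat"
  assumes A: "finite A" "card A \<ge> 2"
  shows "(\<exists>K. \<forall>t\<in>T. \<forall>i\<in>A. sum (g t) (A - {i}) = K) \<longleftrightarrow> (\<exists>K. \<forall>t\<in>T. \<forall>j\<in>A. g t j = K)"
proof
  assume "\<exists>K. \<forall>t\<in>T. \<forall>i\<in>A. sum (g t) (A - {i}) = K"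
  then obtain K where "\<And>t i. t \<in> T \<Longrightarrow> i \<in> A \<Longrightarrow> sum (g t) (A - {i}) = K"
    by blast
  then have "(card A - 1) * g t j = K" if "t \<in> T" "j \<in> A" for t j
    using sum_remove_eq_imp_mult_eq[OF A(1)] that by blast
  moreover have "card A - 1 > 0"
    using A(2) by simp
  ultimately have "g t j = K div (card A - 1)" if "t \<in> T" "j \<in> A" for t j
    using that by (metis nonzero_mult_div_cancel_left not_gr0)
  then show "\<exists>K. \<forall>t\<in>T. \<forall>j\<in>A. g t j = K" by blast
next
  assume "\<exists>K. \<forall>t\<in>T. \<forall>j\<in>A. g t j = K"
  then obtain K where "\<And>t j. t \<in> T \<Longrightarrow> j \<in> A \<Longrightarrow> g t j = K" by blast
  then have "sum (g t) (A - {i}) = (card A - 1) * K" if "t \<in> T" "i \<in> A" for t i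
    using that A(1) by (simp add: sum.cong[of "A - {i}" "A - {i}" "g t" "\<lambda>_. K"])
  then show "\<exists>K. \<forall>t\<in>T. \<forall>i\<in>A. sum (g t) (A - {i}) = K" by blast
qed

lemma block_index_less:
  fixes k i a p :: nat
  assumes "k < a" "i < p"
  shows "k * p + i < a * p"
proof -
  have "k * p + i < Suc k * p" using assms by simp
  also have "\<dots> \<le> a * p" using assms by (intro mult_le_mono1) simp
  finally show ?thesis .
qed

lemma block_index_div_mod:
  fixes c a p :: nat
  assumes "c < a * p"
  shows "c div p < a" and "c mod p < p"
  using assms by (cases "p = 0"; simp add: less_mult_imp_div_less)+

lemma ball_block_index_iff:
  fixes a p :: nat
  shows "(\<forall>c\<in>{0..<a * p}. P c) \<longleftrightarrow> (\<forall>k\<in>{0..<a}. \<forall>j\<in>{0..<p}. P (k * p + j))"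
  using block_index_less block_index_div_mod by (metis atLeastLessThan_iff div_mult_mod_eq zero_le)

lemma bij_betw_regroup_blocks:
  fixes a p n :: nat
  shows "bij_betw (\<lambda>((k, (i, u)), x). ((k * p + i, x), u))
    (({0..<a} \<times> ({0..<p} \<times> {0..<n})) \<times> V) (({0..<a * p} \<times> V) \<times> {0..<n})"
  by (rule bij_betw_byWitness[where f' = "\<lambda>((c, x), u). ((c div p, (c mod p, u)), x)"])
    (auto simp: block_index_less block_index_div_mod)

lemma verts_lex_copies_empty:
  "verts (lex_prod (copies c G) (empty_graph n)) = ({0..<c} \<times> verts G) \<times> {0..<n}"
  by (simp add: lex_prod_def copies_def empty_graph_def verts_def)

lemma nbhd_lex_copies_empty:
  assumes "i < c"
  shows "nbhd (lex_prod (copies c G) (empty_graph n)) ((i, x), u) = ({i} \<times> nbhd G x) \<times> {0..<n}"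
  using assms by (auto simp: nbhd_def lex_prod_def copies_def empty_graph_def verts_def adj_def)

lemma verts_tensor_copies_multipartite:
  "verts (tensor_prod (copies a (complete_multipartite n p)) G)
     = ({0..<a} \<times> ({0..<p} \<times> {0..<n})) \<times> verts G"
  by (simp add: tensor_prod_def copies_def complete_multipartite_def verts_def)

lemma nbhd_tensor_copies_multipartite:
  assumes "k < a"
  shows "nbhd (tensor_prod (copies a (complete_multipartite n p)) G) ((k, (i, u)), x)
     = ({k} \<times> (({0..<p} - {i}) \<times> {0..<n})) \<times> nbhd G x"
  using assms by (auto simp: nbhd_def tensor_prod_def copies_def complete_multipartite_def
      verts_def adj_def)

lemma constant_nbhd_sums_lex_copies_empty:
  assumes "n > 0"
  shows "constant_nbhd_sums (lex_prod (copies c G) (empty_graph n)) f \<longleftrightarrow>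
    (\<exists>K. \<forall>x\<in>verts G. \<forall>i\<in>{0..<c}. (\<Sum>y\<in>nbhd G x. \<Sum>v<n. f ((i, y), v)) = K)"
proof -
  have "sum f (nbhd (lex_prod (copies c G) (empty_graph n)) ((i, x), u))
      = (\<Sum>y\<in>nbhd G x. \<Sum>v<n. f ((i, y), v))" if "i < c" for i x u
    using that by (simp add: nbhd_lex_copies_empty sum.cartesian_product' lessThan_atLeast0)
  then show ?thesis
    using assms by (auto simp: constant_nbhd_sums_def verts_lex_copies_empty)
qed

lemma constant_nbhd_sums_tensor_copies_multipartite:
  assumes "n > 0"
  shows "constant_nbhd_sums (tensor_prod (copies a (complete_multipartite n p)) G) h \<longleftrightarrow>
    (\<exists>K. \<forall>x\<in>verts G. \<forall>k\<in>{0..<a}. \<forall>i\<in>{0..<p}.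
       (\<Sum>j\<in>{0..<p} - {i}. \<Sum>y\<in>nbhd G x. \<Sum>v<n. h ((k, (j, v)), y)) = K)"
proof -
  have "sum h (nbhd (tensor_prod (copies a (complete_multipartite n p)) G) ((k, (i, u)), x))
      = (\<Sum>j\<in>{0..<p} - {i}. \<Sum>y\<in>nbhd G x. \<Sum>v<n. h ((k, (j, v)), y))" if "k < a" for k i u x
    using that by (simp add: nbhd_tensor_copies_multipartite sum.cartesian_product'
        lessThan_atLeast0 sum.swap[where B = "nbhd G x"])
  then show ?thesis
    using assms by (auto simp: constant_nbhd_sums_def verts_tensor_copies_multipartite)
qed

theorem theorem16:
  fixes a n p :: nat and G :: "'a graph"
  assumes "a \<ge> 1" and "n > 1" and "p > 1"
    and "simple_graph G" and "regular G"
  shows "distance_magic (lex_prod (copies (a * p) G) (empty_graph n))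
     \<longleftrightarrow> distance_magic (tensor_prod (copies a (complete_multipartite n p)) G)"
proof (rule distance_magic_iff_if_bij_betw)
  have "n > 0" using \<open>n > 1\<close> by simp
  define \<phi> :: "((nat \<times> (nat \<times> nat)) \<times> 'a) \<Rightarrow> ((nat \<times> 'a) \<times> nat)"
    where "\<phi> = (\<lambda>((k, (i, u)), x). ((k * p + i, x), u))"
  show "bij_betw \<phi> (verts (tensor_prod (copies a (complete_multipartite n p)) G))
      (verts (lex_prod (copies (a * p) G) (empty_graph n)))"
    unfolding \<phi>_def verts_tensor_copies_multipartite verts_lex_copies_empty
    by (rule bij_betw_regroup_blocks)
  fix f :: "(nat \<times> 'a) \<times> nat \<Rightarrow> nat"
  define s where "s c x = (\<Sum>y\<in>nbhd G x. \<Sum>v<n. f ((c, y), v))" for c x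
  define g where "g t j = s (snd t * p + j) (fst t)" for t j
  have "constant_nbhd_sums (lex_prod (copies (a * p) G) (empty_graph n)) f \<longleftrightarrow>
      (\<exists>K. \<forall>t\<in>verts G \<times> {0..<a}. \<forall>j\<in>{0..<p}. g t j = K)"
    using \<open>n > 0\<close> by (simp add: constant_nbhd_sums_lex_copies_empty ball_block_index_iff s_def g_def)
  also have "\<dots> \<longleftrightarrow> (\<exists>K. \<forall>t\<in>verts G \<times> {0..<a}. \<forall>i\<in>{0..<p}. sum (g t) ({0..<p} - {i}) = K)"
    using \<open>p > 1\<close> by (intro const_sum_remove_iff_const[symmetric]) auto
  also have "\<dots> \<longleftrightarrow>
      constant_nbhd_sums (tensor_prod (copies a (complete_multipartite n p)) G) (f \<circ> \<phi>)"
    using \<open>n > 0\<close> by (simp add: constant_nbhd_sums_tensor_copies_multipartite s_def g_def \<phi>_def)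
  finally show "constant_nbhd_sums (lex_prod (copies (a * p) G) (empty_graph n)) f \<longleftrightarrow>
      constant_nbhd_sums (tensor_prod (copies a (complete_multipartite n p)) G) (f \<circ> \<phi>)" .
qed

end
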